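(* Let $T$ be a tree with $m$ edges satisfying $\sum_{e_{uv}\in E(T)}(d_u+d_v)=4m$, let $s$ be a positive integer, and let $T_s$ be its $s$-th subdivision tree. Let $T'_s$ be any single-edge division tree of $T_s$. Then $T'_s$ is neutral, and any single-edge division tree $(T'_s)'$ of $T'_s$ is neutral as well.
   Context: All graphs are finite, simple and connected; $d_u$ denotes degree and sums over edges count each edge once. The $s$-th subdivision graph $G_s$ of $G$ is obtained by inserting $s$ new vertices into each edge of $G$. A single-edge division graph $G'$ of $G$ is obtained by inserting one new vertex into one arbitrarily chosen edge of $G$. For a graph $G=(V,E)$ with $m=|E|\geq1$, the assortativity coefficient is $$r(G)=\frac{m^{-1}\sum_{e_{uv}\in E} d_{u}d_{v}-\Big[m^{-1}\sum_{e_{uv}\in E} \tfrac{1}{2}(d_{u}+d_{v})\Big]^{2}}{m^{-1}\sum_{e_{uv}\in E} \tfrac{1}{2}(d^{2}_{u}+d^{2}_{v})-\Big[m^{-1}\sum_{e_{uv}\in E} \tfrac{1}{2}(d_{u}+d_{v})\Big]^{2}},$$ defined whenever the denominator is nonzero; $G$ is neutral if $r(G)$ is defined and equals $0$. *)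

theory Defs
  imports Complex_Main
begin

type_synonym 'a graph = "'a set \<times> 'a set set"

definition verts :: "'a graph \<Rightarrow> 'a set" where "verts G = fst G"
definition edges :: "'a graph \<Rightarrow> 'a set set" where "edges G = snd G"

definition simple_graph :: "'a graph \<Rightarrow> bool" where
  "simple_graph G \<longleftrightarrow> finite (verts G) \<and>
     (\<forall>e\<in>edges G. \<exists>u v. u \<noteq> v \<and> e = {u, v} \<and> u \<in> verts G \<and> v \<in> verts G)"

definition adj :: "'a graph \<Rightarrow> 'a \<Rightarrow> 'a \<Rightarrow> bool" where
  "adj G u v \<longleftrightarrow> {u, v} \<in> edges G"

definition connected_graph :: "'a graph \<Rightarrow> bool" where
  "connected_graph G \<longleftrightarrow> simple_graph G \<and> verts G \<noteq> {} \<and>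
     (\<forall>u\<in>verts G. \<forall>v\<in>verts G. (adj G)\<^sup>*\<^sup>* u v)"

definition is_tree :: "'a graph \<Rightarrow> bool" where
  "is_tree G \<longleftrightarrow> connected_graph G \<and> card (edges G) + 1 = card (verts G)"

definition deg :: "'a graph \<Rightarrow> 'a \<Rightarrow> nat" where
  "deg G u = card {e \<in> edges G. u \<in> e}"

definition path_edges :: "'a list \<Rightarrow> 'a set set" where
  "path_edges xs = set (map (\<lambda>(x, y). {x, y}) (zip xs (tl xs)))"

text \<open>H is the s-th subdivision of G: every edge e of G is replaced by a path P e
  with s new internal vertices (new vertices distinct and not in G).\<close>
definition subdivision :: "nat \<Rightarrow> 'a graph \<Rightarrow> 'a graph \<Rightarrow> bool" where
  "subdivision s G H \<longleftrightarrow> (\<exists>P :: 'a set \<Rightarrow> 'a list.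
     (\<forall>e\<in>edges G. length (P e) = s + 2 \<and> distinct (P e) \<and> {hd (P e), last (P e)} = e \<and>
        set (butlast (tl (P e))) \<inter> verts G = {}) \<and>
     (\<forall>e\<in>edges G. \<forall>e'\<in>edges G. e \<noteq> e' \<longrightarrow>
        set (butlast (tl (P e))) \<inter> set (butlast (tl (P e'))) = {}) \<and>
     verts H = verts G \<union> (\<Union>e\<in>edges G. set (P e)) \<and>
     edges H = (\<Union>e\<in>edges G. path_edges (P e)))"

definition single_edge_division :: "'a graph \<Rightarrow> 'a graph \<Rightarrow> bool" where
  "single_edge_division G H \<longleftrightarrow> (\<exists>u v w. u \<noteq> v \<and> {u, v} \<in> edges G \<and> w \<notin> verts G \<and>
     verts H = insert w (verts G) \<and>
     edges H = insert {u, w} (insert {w, v} (edges G - {{u, v}})))"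

text \<open>Assortativity coefficient; for an edge e = {u,v}:
  d_u d_v = prod over e, d_u + d_v = sum over e, d_u^2 + d_v^2 = sum of squares over e.\<close>
definition assort_mean :: "'a graph \<Rightarrow> real" where
  "assort_mean G = (1 / real (card (edges G))) *
     (\<Sum>e\<in>edges G. (1/2) * (\<Sum>x\<in>e. real (deg G x)))"

definition assort_num :: "'a graph \<Rightarrow> real" where
  "assort_num G = (1 / real (card (edges G))) * (\<Sum>e\<in>edges G. \<Prod>x\<in>e. real (deg G x))
     - (assort_mean G)\<^sup>2"

definition assort_den :: "'a graph \<Rightarrow> real" where
  "assort_den G = (1 / real (card (edges G))) *
     (\<Sum>e\<in>edges G. (1/2) * (\<Sum>x\<in>e. (real (deg G x))\<^sup>2)) - (assort_mean G)\<^sup>2"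

definition assortativity :: "'a graph \<Rightarrow> real" where
  "assortativity G = assort_num G / assort_den G"

definition neutral :: "'a graph \<Rightarrow> bool" where
  "neutral G \<longleftrightarrow> card (edges G) \<ge> 1 \<and> assort_den G \<noteq> 0 \<and> assortativity G = 0"

end

theory Submission
  imports Defs
begin

(* If every edge has an endpoint of degree 2, then on each edge with S = d_u + d_v one has
   d_u d_v = 2 (S - 2) and d_u^2 + d_v^2 = 4 + (S - 2)^2.  If moreover the edge sums S add up
   to 4m, the mean term equals 2, the numerator of r vanishes, and the denominator equals
   sum (S - 4)^2 / (2m), which is positive as soon as some edge has an endpoint of degree
   other than 2.
   Subdividing every edge of T at least once yields such a graph: the new vertices have
   degree 2, and sum S = sum_v d_v^2 grows by 4 for each new vertex while m grows by 1.
   A single-edge division adds one more vertex of degree 2, so it preserves all of this.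
   A vertex of degree other than 2 exists because the degrees of a tree sum to
   2m < 2 |V|. *)

lemma simple_graph_edgeE:
  assumes "simple_graph G" "e \<in> edges G"
  obtains u v where "u \<noteq> v" "e = {u, v}" "u \<in> verts G" "v \<in> verts G"
  using assms unfolding simple_graph_def by blast

lemma simple_graph_edge_subset: "simple_graph G \<Longrightarrow> e \<in> edges G \<Longrightarrow> e \<subseteq> verts G"
  by (metis simple_graph_edgeE empty_subsetI insert_subset)

lemma simple_graph_card_edge: "simple_graph G \<Longrightarrow> e \<in> edges G \<Longrightarrow> card e = 2"
  by (metis simple_graph_edgeE card_2_iff)

lemma simple_graph_finite_verts: "simple_graph G \<Longrightarrow> finite (verts G)"
  unfolding simple_graph_def by blast

lemma simple_graph_finite_edges: "simple_graph G \<Longrightarrow> finite (edges G)"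
  by (meson simple_graph_edge_subset simple_graph_finite_verts Pow_iff finite_Pow_iff
      finite_subset subsetI)

lemma handshake:
  fixes g :: "'a \<Rightarrow> real"
  assumes G: "simple_graph G"
  shows "(\<Sum>e\<in>edges G. \<Sum>x\<in>e. g x) = (\<Sum>v\<in>verts G. g v * real (deg G v))"
proof -
  have "(\<Sum>x\<in>e. g x) = (\<Sum>v\<in>verts G. if v \<in> e then g v else 0)" if "e \<in> edges G" for e
    using simple_graph_edge_subset[OF G that] simple_graph_finite_verts[OF G]
    by (simp add: sum.If_cases inf.absorb2)
  then have "(\<Sum>e\<in>edges G. \<Sum>x\<in>e. g x) =
      (\<Sum>e\<in>edges G. \<Sum>v\<in>verts G. if v \<in> e then g v else 0)"
    by simp
  also have "\<dots> = (\<Sum>v\<in>verts G. \<Sum>e\<in>edges G. if v \<in> e then g v else 0)"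
    by (rule sum.swap)
  also have "\<dots> = (\<Sum>v\<in>verts G. g v * real (deg G v))"
    using simple_graph_finite_edges[OF G]
    by (simp add: sum.If_cases deg_def Int_def conj_commute mult.commute)
  finally show ?thesis .
qed

lemma connected_graph_vertex_on_edge:
  assumes "connected_graph G" "edges G \<noteq> {}" "v \<in> verts G"
  shows "\<exists>e\<in>edges G. v \<in> e"
proof -
  obtain e u w where e: "e \<in> edges G" "e = {u, w}" "u \<in> verts G"
    using assms(1,2) unfolding connected_graph_def by (metis ex_in_conv simple_graph_edgeE)
  have "(adj G)\<^sup>*\<^sup>* v u"
    using assms(1,3) e(3) unfolding connected_graph_def by blast
  then show ?thesis
    by (cases rule: converse_rtranclpE) (use e in \<open>auto simp: adj_def\<close>)
qed

lemma tree_edge_vertex_deg_ne_2: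
  assumes T: "is_tree T" and "edges T \<noteq> {}"
  shows "\<exists>e\<in>edges T. \<exists>v\<in>e. deg T v \<noteq> 2"
proof -
  have simple: "simple_graph T" and conn: "connected_graph T"
    using T unfolding is_tree_def connected_graph_def by blast+
  have degree_sum: "(\<Sum>v\<in>verts T. real (deg T v)) = 2 * real (card (edges T))"
    using handshake[OF simple, of "\<lambda>_. 1"] simple_graph_card_edge[OF simple] by simp
  have card_verts: "card (verts T) = card (edges T) + 1"
    using T unfolding is_tree_def by linarith
  have "\<not> (\<forall>v\<in>verts T. deg T v = 2)"
  proof (intro notI)
    assume "\<forall>v\<in>verts T. deg T v = 2"
    then have "(\<Sum>v\<in>verts T. real (deg T v)) = 2 * real (card (verts T))"
      by simp
    with degree_sum card_verts show False
      by simp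
  qed
  then obtain v where "v \<in> verts T" "deg T v \<noteq> 2"
    by blast
  then show ?thesis
    using connected_graph_vertex_on_edge[OF conn assms(2)] by blast
qed

definition inner_verts :: "'a list \<Rightarrow> 'a set" where
  "inner_verts xs = set (butlast (tl xs))"

lemma path_edges_conv_nth: "path_edges xs = {{xs ! i, xs ! Suc i} | i. Suc i < length xs}"
proof -
  have "set (zip xs (tl xs)) = {(xs ! i, xs ! Suc i) | i. Suc i < length xs}"
    by (fastforce simp: set_zip nth_tl)
  then show ?thesis
    unfolding path_edges_def set_map by force
qed

lemma inner_verts_conv_nth: "inner_verts xs = {xs ! j | j. 0 < j \<and> Suc j < length xs}"
proof -
  have "inner_verts xs = {xs ! Suc i | i. Suc (Suc i) < length xs}"
    unfolding inner_verts_def set_conv_nth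
    by (intro Collect_cong arg_cong[where f = Ex] ext) (auto simp: nth_butlast nth_tl)
  also have "\<dots> = {xs ! j | j. 0 < j \<and> Suc j < length xs}"
    by (force simp: gr0_conv_Suc)
  finally show ?thesis .
qed

lemma path_edge_subset: "f \<in> path_edges xs \<Longrightarrow> f \<subseteq> set xs"
  unfolding path_edges_conv_nth by auto

lemma path_edge_doubleton:
  assumes "distinct xs" "f \<in> path_edges xs"
  obtains a b where "a \<noteq> b" "f = {a, b}" "a \<in> set xs" "b \<in> set xs"
proof -
  obtain i where "f = {xs ! i, xs ! Suc i}" "Suc i < length xs"
    using assms(2) unfolding path_edges_conv_nth by blast
  with assms(1) show thesis
    by (intro that[of "xs ! i" "xs ! Suc i"]) (auto simp: nth_eq_iff_index_eq)
qed

lemma set_eq_ends_Un_inner_verts: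
  assumes "length xs \<ge> 2"
  shows "set xs = {hd xs, last xs} \<union> inner_verts xs"
proof -
  obtain x ys where xs: "xs = x # ys" and "ys \<noteq> []"
    using assms by (force simp: Suc_le_length_iff numeral_2_eq_2)
  then have "set ys = insert (last ys) (set (butlast ys))"
    by (metis append_butlast_last_id list.simps(15) rotate1.simps(2) set_rotate1)
  then show ?thesis
    unfolding inner_verts_def xs using \<open>ys \<noteq> []\<close> by auto
qed

lemma card_inner_verts: "distinct xs \<Longrightarrow> card (inner_verts xs) = length xs - 2"
  unfolding inner_verts_def by (simp add: distinct_card distinct_butlast distinct_tl)

lemma path_edge_meets_inner_verts:
  assumes "length xs \<ge> 3" "f \<in> path_edges xs"
  shows "f \<inter> inner_verts xs \<noteq> {}"
proof -
  obtain i where i: "f = {xs ! i, xs ! Suc i}" "Suc i < length xs"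
    using assms(2) unfolding path_edges_conv_nth by blast
  have "(if i = 0 then xs ! Suc i else xs ! i) \<in> inner_verts xs"
    unfolding inner_verts_conv_nth using assms(1) i(2)
    by (auto intro!: exI[of _ "if i = 0 then Suc i else i"])
  then show ?thesis
    using i(1) by (auto split: if_splits)
qed

lemma card_path_edges_inner_vert:
  assumes xs: "distinct xs" and x: "x \<in> inner_verts xs"
  shows "card {f \<in> path_edges xs. x \<in> f} = 2"
proof -
  obtain j where j: "x = xs ! j" "0 < j" "Suc j < length xs"
    using x unfolding inner_verts_conv_nth by blast
  have "{f \<in> path_edges xs. x \<in> f} = {{xs ! (j - 1), xs ! j}, {xs ! j, xs ! Suc j}}"
  proof
    show "{f \<in> path_edges xs. x \<in> f} \<subseteq> {{xs ! (j - 1), xs ! j}, {xs ! j, xs ! Suc j}}"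
    proof
      fix f assume "f \<in> {f \<in> path_edges xs. x \<in> f}"
      then obtain i where i: "f = {xs ! i, xs ! Suc i}" "Suc i < length xs" "x \<in> f"
        unfolding path_edges_conv_nth by blast
      then have "j = i \<or> j = Suc i"
        using xs j by (auto simp: nth_eq_iff_index_eq)
      then show "f \<in> {{xs ! (j - 1), xs ! j}, {xs ! j, xs ! Suc j}}"
        using i(1) by auto
    qed
    have "{xs ! (j - 1), xs ! Suc (j - 1)} \<in> path_edges xs" "{xs ! j, xs ! Suc j} \<in> path_edges xs"
      unfolding path_edges_conv_nth using j by auto
    then show "{{xs ! (j - 1), xs ! j}, {xs ! j, xs ! Suc j}} \<subseteq> {f \<in> path_edges xs. x \<in> f}"
      using j by auto
  qed
  moreover have "{xs ! (j - 1), xs ! j} \<noteq> {xs ! j, xs ! Suc j}"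
    using xs j by (auto simp: doubleton_eq_iff nth_eq_iff_index_eq)
  ultimately show ?thesis
    by simp
qed

lemma card_path_edges_end_vert:
  assumes xs: "distinct xs" "length xs \<ge> 2" and x: "x \<in> {hd xs, last xs}"
  shows "card {f \<in> path_edges xs. x \<in> f} = 1"
proof -
  obtain k where k: "x = xs ! k" "k = 0 \<or> k = length xs - 1"
    using x xs(2) by (metis hd_conv_nth last_conv_nth insert_iff singletonD list.size(3) not_numeral_le_zero)
  define i where "i = (if k = 0 then 0 else length xs - 2)"
  have "{f \<in> path_edges xs. x \<in> f} = {{xs ! i, xs ! Suc i}}"
  proof
    show "{f \<in> path_edges xs. x \<in> f} \<subseteq> {{xs ! i, xs ! Suc i}}"
    proof
      fix f assume "f \<in> {f \<in> path_edges xs. x \<in> f}"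
      then obtain i' where i': "f = {xs ! i', xs ! Suc i'}" "Suc i' < length xs" "x \<in> f"
        unfolding path_edges_conv_nth by blast
      then have "xs ! k = xs ! i' \<or> xs ! k = xs ! Suc i'"
        using k(1) by auto
      moreover have "k < length xs"
        using k(2) xs(2) by auto
      ultimately have "k = i' \<or> k = Suc i'"
        using nth_eq_iff_index_eq[OF xs(1)] i'(2) by auto
      then have "i' = i"
        using k i'(2) unfolding i_def by auto
      then show "f \<in> {{xs ! i, xs ! Suc i}}"
        using i' by auto
    qed
    have "{xs ! i, xs ! Suc i} \<in> path_edges xs" "x \<in> {xs ! i, xs ! Suc i}"
      unfolding path_edges_conv_nth using xs(2) k unfolding i_def by (auto simp: Suc_diff_Suc numeral_2_eq_2)
    then show "{{xs ! i, xs ! Suc i}} \<subseteq> {f \<in> path_edges xs. x \<in> f}"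
      by auto
  qed
  then show ?thesis
    by simp
qed

abbreviation edge_deg_sum :: "'a graph \<Rightarrow> 'a set \<Rightarrow> real" where
  "edge_deg_sum G e \<equiv> \<Sum>x\<in>e. real (deg G x)"

definition degree_two_balanced :: "'a graph \<Rightarrow> bool" where
  "degree_two_balanced G \<longleftrightarrow> simple_graph G \<and>
     (\<forall>e\<in>edges G. \<exists>x\<in>e. deg G x = 2) \<and>
     (\<Sum>e\<in>edges G. edge_deg_sum G e) = 4 * real (card (edges G)) \<and>
     (\<exists>e\<in>edges G. \<exists>x\<in>e. deg G x \<noteq> 2)"

lemma prod_and_sum_squares_doubleton:
  fixes d :: "'a \<Rightarrow> real"
  assumes "u \<noteq> v" "d u = 2 \<or> d v = 2"
  shows "(\<Prod>x\<in>{u, v}. d x) = 2 * ((\<Sum>x\<in>{u, v}. d x) - 2)"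
    and "(\<Sum>x\<in>{u, v}. (d x)\<^sup>2) = 4 + ((\<Sum>x\<in>{u, v}. d x) - 2)\<^sup>2"
  using assms by (auto simp: power2_eq_square)

context
  fixes G :: "'a graph"
  assumes G: "degree_two_balanced G"
begin

private lemma simple: "simple_graph G"
  using G unfolding degree_two_balanced_def by blast

private lemma edge_sum: "(\<Sum>e\<in>edges G. edge_deg_sum G e) = 4 * real (card (edges G))"
  using G unfolding degree_two_balanced_def by blast

lemma degree_two_balanced_edge_identities:
  assumes e: "e \<in> edges G"
  shows "(\<Prod>x\<in>e. real (deg G x)) = 2 * (edge_deg_sum G e - 2)"
    and "(\<Sum>x\<in>e. (real (deg G x))\<^sup>2) = 4 + (edge_deg_sum G e - 2)\<^sup>2"
proof -
  obtain a b where "a \<noteq> b" "e = {a, b}"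
    using simple_graph_edgeE[OF simple e] by metis
  moreover have "\<exists>x\<in>e. deg G x = 2"
    using G e unfolding degree_two_balanced_def by blast
  ultimately show "(\<Prod>x\<in>e. real (deg G x)) = 2 * (edge_deg_sum G e - 2)"
    and "(\<Sum>x\<in>e. (real (deg G x))\<^sup>2) = 4 + (edge_deg_sum G e - 2)\<^sup>2"
    using prod_and_sum_squares_doubleton[of a b "\<lambda>x. real (deg G x)"] by auto
qed

lemma degree_two_balanced_irregular_edge: "\<exists>e\<in>edges G. edge_deg_sum G e \<noteq> 4"
proof -
  obtain e x where e: "e \<in> edges G" "x \<in> e" "deg G x \<noteq> 2"
    using G unfolding degree_two_balanced_def by blast
  obtain a b where "a \<noteq> b" "e = {a, b}"
    using simple_graph_edgeE[OF simple e(1)] by metis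
  moreover have "\<exists>y\<in>e. deg G y = 2"
    using G e(1) unfolding degree_two_balanced_def by blast
  ultimately have "edge_deg_sum G e \<noteq> 4"
    using e(2,3) by auto
  then show ?thesis
    using e(1) by blast
qed

lemma degree_two_balanced_card_edges_pos: "card (edges G) > 0"
  using degree_two_balanced_irregular_edge simple_graph_finite_edges[OF simple]
  by (auto simp: card_gt_0_iff)

lemma degree_two_balanced_assort_mean: "assort_mean G = 2"
proof -
  have "assort_mean G = (1 / card (edges G)) * ((1/2) * (\<Sum>e\<in>edges G. edge_deg_sum G e))"
    unfolding assort_mean_def by (simp add: sum_distrib_left)
  then show ?thesis
    using edge_sum degree_two_balanced_card_edges_pos by simp
qed

lemma degree_two_balanced_assort_num: "assort_num G = 0"
proof -
  have "(\<Sum>e\<in>edges G. \<Prod>x\<in>e. real (deg G x)) = (\<Sum>e\<in>edges G. 2 * (edge_deg_sum G e - 2))"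
    using degree_two_balanced_edge_identities by simp
  also have "\<dots> = 4 * real (card (edges G))"
    using edge_sum by (simp add: sum_distrib_left[symmetric] sum_subtractf)
  finally show ?thesis
    using degree_two_balanced_card_edges_pos
    unfolding assort_num_def degree_two_balanced_assort_mean by simp
qed

lemma degree_two_balanced_assort_den:
  "assort_den G = (\<Sum>e\<in>edges G. (edge_deg_sum G e - 4)\<^sup>2) / (2 * real (card (edges G)))"
proof -
  define m where "m = real (card (edges G))"
  have "(\<Sum>e\<in>edges G. (1/2) * (\<Sum>x\<in>e. (real (deg G x))\<^sup>2)) =
      (\<Sum>e\<in>edges G. (1/2) * (edge_deg_sum G e - 4)\<^sup>2 + 2 * (edge_deg_sum G e - 2))"
  proof (rule sum.cong[OF refl])
    fix e assume "e \<in> edges G"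
    then have "(\<Sum>x\<in>e. (real (deg G x))\<^sup>2) = 4 + (edge_deg_sum G e - 2)\<^sup>2"
      by (rule degree_two_balanced_edge_identities)
    then show "(1/2) * (\<Sum>x\<in>e. (real (deg G x))\<^sup>2) =
        (1/2) * (edge_deg_sum G e - 4)\<^sup>2 + 2 * (edge_deg_sum G e - 2)"
      by (simp add: power2_eq_square algebra_simps)
  qed
  also have "\<dots> = (1/2) * (\<Sum>e\<in>edges G. (edge_deg_sum G e - 4)\<^sup>2) + 4 * m"
    using edge_sum by (simp add: sum.distrib sum_subtractf sum_distrib_left[symmetric]
        sum_divide_distrib[symmetric] m_def)
  finally have "assort_den G =
      (1 / m) * ((1/2) * (\<Sum>e\<in>edges G. (edge_deg_sum G e - 4)\<^sup>2) + 4 * m) - 2\<^sup>2"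
    unfolding assort_den_def degree_two_balanced_assort_mean m_def by simp
  also have "\<dots> = (\<Sum>e\<in>edges G. (edge_deg_sum G e - 4)\<^sup>2) / (2 * m)"
    using degree_two_balanced_card_edges_pos by (simp add: m_def field_simps)
  finally show ?thesis
    unfolding m_def .
qed

lemma degree_two_balanced_neutral: "neutral G"
proof -
  obtain e0 where e0: "e0 \<in> edges G" "edge_deg_sum G e0 \<noteq> 4"
    using degree_two_balanced_irregular_edge by blast
  have "(edge_deg_sum G e0 - 4)\<^sup>2 \<le> (\<Sum>e\<in>edges G. (edge_deg_sum G e - 4)\<^sup>2)"
    using simple_graph_finite_edges[OF simple] e0(1) by (intro member_le_sum) auto
  with e0(2) have "(\<Sum>e\<in>edges G. (edge_deg_sum G e - 4)\<^sup>2) > 0"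
    by (smt (verit) zero_less_power2)
  then have "assort_den G > 0"
    using degree_two_balanced_card_edges_pos by (simp add: degree_two_balanced_assort_den)
  then show ?thesis
    using degree_two_balanced_card_edges_pos degree_two_balanced_assort_num
    unfolding neutral_def assortativity_def by simp
qed

end

locale edge_division =
  fixes G H :: "'a graph" and u v w :: 'a
  assumes simple: "simple_graph G"
    and distinct_ends: "u \<noteq> v"
    and divided_edge: "{u, v} \<in> edges G"
    and fresh: "w \<notin> verts G"
    and verts_H: "verts H = insert w (verts G)"
    and edges_H: "edges H = insert {u, w} (insert {w, v} (edges G - {{u, v}}))"

lemma single_edge_divisionE:
  assumes "simple_graph G" "single_edge_division G H"
  obtains u v w where "edge_division G H u v w"
  using assms unfolding single_edge_division_def edge_division_def by blast

context edge_division
begin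

lemma ends_in_verts: "u \<in> verts G" "v \<in> verts G"
  using simple_graph_edge_subset[OF simple divided_edge] by auto

lemma fresh_ne: "u \<noteq> w" "v \<noteq> w"
  using ends_in_verts fresh by auto

lemma fresh_notin_edge: "e \<in> edges G \<Longrightarrow> w \<notin> e"
  using simple_graph_edge_subset[OF simple] fresh by blast

lemma new_edges_distinct: "{u, w} \<noteq> {w, v}"
  using distinct_ends fresh_ne by (auto simp: doubleton_eq_iff)

lemma simple_H: "simple_graph H"
  using simple ends_in_verts fresh_ne
  unfolding simple_graph_def verts_H edges_H by (auto 0 3)

lemma card_edges_H: "card (edges H) = card (edges G) + 1"
proof -
  have "card (edges G - {{u, v}}) + 1 = card (edges G)"
    using simple_graph_finite_edges[OF simple] divided_edge
    by (metis Suc_eq_plus1 card_Suc_Diff1)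
  moreover have "{u, w} \<notin> edges G" "{w, v} \<notin> edges G"
    using fresh_notin_edge by auto
  ultimately show ?thesis
    using simple_graph_finite_edges[OF simple] new_edges_distinct by (simp add: edges_H)
qed

lemma deg_fresh: "deg H w = 2"
proof -
  have "{e \<in> edges H. w \<in> e} = {{u, w}, {w, v}}"
    using fresh_notin_edge by (auto simp: edges_H)
  then show ?thesis
    using new_edges_distinct by (simp add: deg_def)
qed

lemma deg_orig:
  assumes x: "x \<in> verts G"
  shows "deg H x = deg G x"
proof -
  define I where "I = {e \<in> edges G. x \<in> e}"
  define N where "N = {f \<in> {{u, w}, {w, v}}. x \<in> f}"
  have finite_I: "finite I"
    using simple_graph_finite_edges[OF simple] by (simp add: I_def)
  have incident: "{e \<in> edges H. x \<in> e} = N \<union> (I - {{u, v}})"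
    unfolding edges_H I_def N_def by auto
  have disjoint: "N \<inter> (I - {{u, v}}) = {}"
    using fresh_notin_edge unfolding N_def I_def by auto
  have "card N + card (I - {{u, v}}) = card I"
  proof (cases "x = u \<or> x = v")
    case True
    then have "card N = 1"
      using x fresh distinct_ends unfolding N_def by (auto simp: card_1_singleton_iff)
    moreover have "{u, v} \<in> I"
      using True divided_edge unfolding I_def by auto
    ultimately show ?thesis
      using finite_I card_gt_0_iff[of I] by auto
  next
    case False
    then have "N = {}" "{u, v} \<notin> I"
      using x fresh unfolding N_def I_def by auto
    then show ?thesis
      by simp
  qed
  then show ?thesis
    unfolding deg_def incident I_def[symmetric]
    using finite_I disjoint by (simp add: card_Un_disjoint N_def)
qed

lemma edge_degree_sum_H:
  "(\<Sum>e\<in>edges H. edge_deg_sum H e) = (\<Sum>e\<in>edges G. edge_deg_sum G e) + 4"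
proof -
  have "(\<Sum>e\<in>edges H. edge_deg_sum H e) = (\<Sum>x\<in>verts H. real (deg H x) * real (deg H x))"
    by (rule handshake[OF simple_H])
  also have "\<dots> = 4 + (\<Sum>x\<in>verts G. real (deg G x) * real (deg G x))"
    using simple_graph_finite_verts[OF simple] fresh deg_fresh deg_orig by (simp add: verts_H)
  also have "(\<Sum>x\<in>verts G. real (deg G x) * real (deg G x)) = (\<Sum>e\<in>edges G. edge_deg_sum G e)"
    by (rule handshake[OF simple, symmetric])
  finally show ?thesis
    by simp
qed

lemma vertex_on_edge_H:
  assumes "e \<in> edges G" "x \<in> e"
  shows "\<exists>f\<in>edges H. x \<in> f"
  using assms by (cases "e = {u, v}") (auto simp: edges_H)

lemma degree_two_balanced_H:
  assumes G: "degree_two_balanced G"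
  shows "degree_two_balanced H"
  unfolding degree_two_balanced_def
proof (intro conjI)
  have verts_of_edge: "e \<in> edges G \<Longrightarrow> x \<in> e \<Longrightarrow> x \<in> verts G" for e x
    using simple_graph_edge_subset[OF simple] by blast
  show "simple_graph H"
    by (rule simple_H)
  show "\<forall>e\<in>edges H. \<exists>x\<in>e. deg H x = 2"
  proof
    fix e assume e: "e \<in> edges H"
    show "\<exists>x\<in>e. deg H x = 2"
    proof (cases "w \<in> e")
      case True
      then show ?thesis
        using deg_fresh by blast
    next
      case False
      then have "e \<in> edges G"
        using e by (auto simp: edges_H)
      then show ?thesis
        using G deg_orig verts_of_edge unfolding degree_two_balanced_def by metis
    qed
  qed
  show "(\<Sum>e\<in>edges H. edge_deg_sum H e) = 4 * real (card (edges H))"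
    using G edge_degree_sum_H card_edges_H unfolding degree_two_balanced_def by simp
  obtain e x where "e \<in> edges G" "x \<in> e" "deg G x \<noteq> 2"
    using G unfolding degree_two_balanced_def by blast
  then show "\<exists>e\<in>edges H. \<exists>x\<in>e. deg H x \<noteq> 2"
    using vertex_on_edge_H deg_orig verts_of_edge by metis
qed

end

lemma degree_two_balanced_single_edge_division:
  assumes "degree_two_balanced G" "single_edge_division G H"
  shows "degree_two_balanced H"
proof -
  obtain u v w where "edge_division G H u v w"
    using assms single_edge_divisionE unfolding degree_two_balanced_def by metis
  then show ?thesis
    using assms(1) by (rule edge_division.degree_two_balanced_H)
qed

locale subdivision_paths =
  fixes s :: nat and G H :: "'a graph" and P :: "'a set \<Rightarrow> 'a list"
  assumes simple: "simple_graph G"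
    and s_pos: "s \<ge> 1"
    and length_path: "e \<in> edges G \<Longrightarrow> length (P e) = s + 2"
    and distinct_path: "e \<in> edges G \<Longrightarrow> distinct (P e)"
    and ends_path: "e \<in> edges G \<Longrightarrow> {hd (P e), last (P e)} = e"
    and inner_fresh: "e \<in> edges G \<Longrightarrow> inner_verts (P e) \<inter> verts G = {}"
    and inner_disjoint: "e \<in> edges G \<Longrightarrow> e' \<in> edges G \<Longrightarrow> e \<noteq> e' \<Longrightarrow>
      inner_verts (P e) \<inter> inner_verts (P e') = {}"
    and verts_H: "verts H = verts G \<union> (\<Union>e\<in>edges G. set (P e))"
    and edges_H: "edges H = (\<Union>e\<in>edges G. path_edges (P e))"

lemma subdivisionE:
  assumes "simple_graph G" "s \<ge> 1" "subdivision s G H"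
  obtains P where "subdivision_paths s G H P"
proof -
  obtain P where P:
    "\<forall>e\<in>edges G. length (P e) = s + 2 \<and> distinct (P e) \<and> {hd (P e), last (P e)} = e \<and>
       inner_verts (P e) \<inter> verts G = {}"
    "\<forall>e\<in>edges G. \<forall>e'\<in>edges G. e \<noteq> e' \<longrightarrow> inner_verts (P e) \<inter> inner_verts (P e') = {}"
    "verts H = verts G \<union> (\<Union>e\<in>edges G. set (P e))"
    "edges H = (\<Union>e\<in>edges G. path_edges (P e))"
    using assms(3) unfolding subdivision_def inner_verts_def by (elim exE conjE) blast
  have "subdivision_paths s G H P"
    using assms(1,2) P by unfold_locales blast+
  then show thesis
    by (rule that)
qed

context subdivision_paths
begin

definition new_verts :: "'a set" where
  "new_verts = (\<Union>e\<in>edges G. inner_verts (P e))"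

lemma set_path: "e \<in> edges G \<Longrightarrow> set (P e) = e \<union> inner_verts (P e)"
  using set_eq_ends_Un_inner_verts[of "P e"] length_path ends_path by simp

lemma inner_vert_unique:
  assumes "e \<in> edges G" "e' \<in> edges G" "x \<in> inner_verts (P e)" "x \<in> set (P e')"
  shows "e' = e"
proof -
  have "x \<notin> e'"
    using assms inner_fresh simple_graph_edge_subset[OF simple] by blast
  then have "x \<in> inner_verts (P e')"
    using assms(2,4) set_path by blast
  then show ?thesis
    using assms(1-3) inner_disjoint by blast
qed

lemma path_edge_meets_inner:
  assumes "e \<in> edges G" "f \<in> path_edges (P e)"
  obtains x where "x \<in> f" "x \<in> inner_verts (P e)"
  using path_edge_meets_inner_verts[of "P e" f] assms length_path s_pos by fastforce

lemma path_edge_unique: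
  assumes "e \<in> edges G" "e' \<in> edges G" "f \<in> path_edges (P e)" "f \<in> path_edges (P e')"
  shows "e' = e"
proof -
  obtain x where "x \<in> f" "x \<in> inner_verts (P e)"
    using path_edge_meets_inner assms(1,3) .
  then show ?thesis
    using inner_vert_unique[OF assms(1,2)] path_edge_subset[OF assms(4)] by blast
qed

lemma verts_H_eq: "verts H = verts G \<union> new_verts"
  using set_path simple_graph_edge_subset[OF simple] unfolding verts_H new_verts_def by auto

lemma new_verts_disjoint: "verts G \<inter> new_verts = {}"
  using inner_fresh unfolding new_verts_def by blast

lemma finite_new_verts: "finite new_verts"
  using simple_graph_finite_edges[OF simple] unfolding new_verts_def inner_verts_def by simp

lemma card_new_verts: "card new_verts = s * card (edges G)"
proof -
  have "card new_verts = (\<Sum>e\<in>edges G. card (inner_verts (P e)))"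
    unfolding new_verts_def using simple_graph_finite_edges[OF simple] inner_disjoint
    by (intro card_UN_disjoint) (auto simp: inner_verts_def)
  also have "\<dots> = (\<Sum>e\<in>edges G. s)"
    by (intro sum.cong) (simp_all add: card_inner_verts distinct_path length_path)
  finally show ?thesis
    by simp
qed

lemma simple_H: "simple_graph H"
  unfolding simple_graph_def
proof (intro conjI ballI)
  show "finite (verts H)"
    using simple_graph_finite_verts[OF simple] finite_new_verts by (simp add: verts_H_eq)
  fix f assume "f \<in> edges H"
  then obtain e where e: "e \<in> edges G" "f \<in> path_edges (P e)"
    unfolding edges_H by blast
  then obtain a b where "a \<noteq> b" "f = {a, b}" "a \<in> set (P e)" "b \<in> set (P e)"
    using path_edge_doubleton distinct_path by metis
  then show "\<exists>a b. a \<noteq> b \<and> f = {a, b} \<and> a \<in> verts H \<and> b \<in> verts H"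
    using e(1) unfolding verts_H by blast
qed

lemma card_path_edges_at_end:
  assumes "e \<in> edges G" "x \<in> e"
  shows "card {f \<in> path_edges (P e). x \<in> f} = 1"
  using assms card_path_edges_end_vert[OF distinct_path, of e x] length_path[of e] ends_path[of e]
  by simp

lemma deg_inner:
  assumes e: "e \<in> edges G" and x: "x \<in> inner_verts (P e)"
  shows "deg H x = 2"
proof -
  have "{f \<in> edges H. x \<in> f} = {f \<in> path_edges (P e). x \<in> f}"
    using e inner_vert_unique[OF e _ x] path_edge_subset unfolding edges_H by blast
  then show ?thesis
    unfolding deg_def using card_path_edges_inner_vert[OF distinct_path[OF e] x] by simp
qed

lemma deg_orig:
  assumes x: "x \<in> verts G"
  shows "deg H x = deg G x"
proof -
  define A where "A e = {f \<in> path_edges (P e). x \<in> f}" for e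
  have incident: "{f \<in> edges H. x \<in> f} = (\<Union>e\<in>{e \<in> edges G. x \<in> e}. A e)"
  proof -
    have "x \<in> e" if "e \<in> edges G" "f \<in> path_edges (P e)" "x \<in> f" for e f
      using that x set_path inner_fresh path_edge_subset by blast
    then show ?thesis
      unfolding edges_H A_def by blast
  qed
  have "finite (A e)" for e
    unfolding A_def path_edges_def by simp
  moreover have "A e \<inter> A e' = {}" if "e \<in> edges G" "e' \<in> edges G" "e \<noteq> e'" for e e'
    using path_edge_unique that unfolding A_def by blast
  ultimately have "card (\<Union>e\<in>{e \<in> edges G. x \<in> e}. A e) =
      (\<Sum>e\<in>{e \<in> edges G. x \<in> e}. card (A e))"
    using simple_graph_finite_edges[OF simple] by (intro card_UN_disjoint) auto
  also have "\<dots> = card {e \<in> edges G. x \<in> e}"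
    using card_path_edges_at_end unfolding A_def by simp
  finally show ?thesis
    unfolding deg_def incident .
qed

lemma sum_verts_H:
  "(\<Sum>x\<in>verts H. g x) = (\<Sum>x\<in>verts G. g x) + (\<Sum>x\<in>new_verts. g x)"
  using simple_graph_finite_verts[OF simple] finite_new_verts new_verts_disjoint
  by (simp add: verts_H_eq sum.union_disjoint)

lemma deg_new_verts: "x \<in> new_verts \<Longrightarrow> deg H x = 2"
  using deg_inner unfolding new_verts_def by blast

lemma card_edges_H: "card (edges H) = (s + 1) * card (edges G)"
proof -
  have "2 * real (card (edges H)) = (\<Sum>x\<in>verts H. real (deg H x))"
    using handshake[OF simple_H, of "\<lambda>_. 1"] simple_graph_card_edge[OF simple_H] by simp
  also have "\<dots> = (\<Sum>x\<in>verts G. real (deg G x)) + 2 * real (card new_verts)"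
    using deg_orig deg_new_verts by (simp add: sum_verts_H)
  also have "(\<Sum>x\<in>verts G. real (deg G x)) = 2 * real (card (edges G))"
    using handshake[OF simple, of "\<lambda>_. 1"] simple_graph_card_edge[OF simple] by simp
  finally show ?thesis
    unfolding card_new_verts by (simp add: algebra_simps flip: of_nat_mult of_nat_add)
qed

lemma edge_degree_sum_H:
  "(\<Sum>e\<in>edges H. edge_deg_sum H e) =
     (\<Sum>e\<in>edges G. edge_deg_sum G e) + 4 * s * card (edges G)"
proof -
  have "(\<Sum>e\<in>edges H. edge_deg_sum H e) = (\<Sum>x\<in>verts H. real (deg H x) * real (deg H x))"
    by (rule handshake[OF simple_H])
  also have "\<dots> = (\<Sum>x\<in>verts G. real (deg G x) * real (deg G x)) + 4 * real (card new_verts)"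
    using deg_orig deg_new_verts by (simp add: sum_verts_H)
  also have "(\<Sum>x\<in>verts G. real (deg G x) * real (deg G x)) = (\<Sum>e\<in>edges G. edge_deg_sum G e)"
    by (rule handshake[OF simple, symmetric])
  finally show ?thesis
    by (simp add: card_new_verts)
qed

lemma vertex_on_edge_H:
  assumes "e \<in> edges G" "x \<in> e"
  shows "\<exists>f\<in>edges H. x \<in> f"
proof -
  have "{f \<in> path_edges (P e). x \<in> f} \<noteq> {}"
    using card_path_edges_at_end[OF assms] by force
  then show ?thesis
    using assms(1) unfolding edges_H by blast
qed

lemma degree_two_balanced_H:
  assumes edge_sum: "(\<Sum>e\<in>edges G. edge_deg_sum G e) = 4 * real (card (edges G))"
    and irregular: "\<exists>e\<in>edges G. \<exists>x\<in>e. deg G x \<noteq> 2"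
  shows "degree_two_balanced H"
  unfolding degree_two_balanced_def
proof (intro conjI)
  show "simple_graph H"
    by (rule simple_H)
  show "\<forall>f\<in>edges H. \<exists>x\<in>f. deg H x = 2"
    using path_edge_meets_inner deg_inner unfolding edges_H by blast
  show "(\<Sum>f\<in>edges H. edge_deg_sum H f) = 4 * real (card (edges H))"
    using edge_sum by (simp add: edge_degree_sum_H card_edges_H algebra_simps)
  obtain e x where e: "e \<in> edges G" "x \<in> e" and "deg G x \<noteq> 2"
    using irregular by blast
  moreover have "x \<in> verts G"
    using simple_graph_edge_subset[OF simple e(1)] e(2) by blast
  ultimately have "deg H x \<noteq> 2"
    using deg_orig by simp
  then show "\<exists>f\<in>edges H. \<exists>x\<in>f. deg H x \<noteq> 2"
    using vertex_on_edge_H[OF e] by blast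
qed

end

theorem corollary1:
  fixes T Ts H :: "'a graph" and s :: nat
  assumes "is_tree T"
    and "(\<Sum>e\<in>edges T. \<Sum>x\<in>e. real (deg T x)) = 4 * real (card (edges T))"
    and "s \<ge> 1"
    and "subdivision s T Ts"
    and "single_edge_division Ts H"
  shows "neutral H \<and> (\<forall>H'. single_edge_division H H' \<longrightarrow> neutral H')"
proof -
  have "simple_graph T"
    using assms(1) unfolding is_tree_def connected_graph_def by blast
  then obtain P where sub: "subdivision_paths s T Ts P"
    using subdivisionE assms(3,4) by blast
  have "edges Ts \<noteq> {}"
    using assms(5) unfolding single_edge_division_def by blast
  then have "edges T \<noteq> {}"
    using subdivision_paths.edges_H[OF sub] by auto
  then have "\<exists>e\<in>edges T. \<exists>v\<in>e. deg T v \<noteq> 2"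
    using tree_edge_vertex_deg_ne_2[OF assms(1)] by blast
  then have "degree_two_balanced Ts"
    using subdivision_paths.degree_two_balanced_H[OF sub assms(2)] by blast
  then have "degree_two_balanced H"
    using assms(5) by (rule degree_two_balanced_single_edge_division)
  then show ?thesis
    using degree_two_balanced_neutral degree_two_balanced_single_edge_division by blast
qed

end
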